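(* For all integers $m\ge 1$ and $n\ge0$, $$\sum_{k=0}^{n}\begin{bmatrix}n\\k\end{bmatrix}q^{\binom k2}\,[m+2k]\,\frac{[m+k-1]!}{[m+n+k]!}=\frac{(-1;q)_n}{[m+1]\,[m+3]\cdots[m+2n-1]},$$ the empty product for $n=0$ being $1$. Equivalently, for an indeterminate $a$, $$\sum_{k=0}^{n}\begin{bmatrix}n\\k\end{bmatrix}q^{\binom k2}\frac{1-q^{2k}a}{(q^ka;q)_{n+1}}=\frac{(-1;q)_n}{(qa;q^2)_n}.$$
   Context: $q$ is an indeterminate; $[n]=\frac{1-q^n}{1-q}$, $[n]!=[1]\cdots[n]$, $[0]!=1$, $\begin{bmatrix}n\\k\end{bmatrix}=\frac{[n]!}{[k]![n-k]!}$; $(a;q)_n=(1-a)(1-qa)\cdots(1-q^{n-1}a)$, $(a;q)_0=1$. *)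

theory Defs
  imports "HOL-Computational_Algebra.Polynomial" "HOL-Computational_Algebra.Fraction_Field"
begin

text \<open>q-analogues over an arbitrary field; q will be instantiated with a genuine
indeterminate.\<close>

definition qint :: "'a::field \<Rightarrow> nat \<Rightarrow> 'a" where
  "qint q n = (1 - q ^ n) / (1 - q)"

definition qfact :: "'a::field \<Rightarrow> nat \<Rightarrow> 'a" where
  "qfact q n = (\<Prod>i=1..n. qint q i)"

definition qbinom :: "'a::field \<Rightarrow> nat \<Rightarrow> nat \<Rightarrow> 'a" where
  "qbinom q n k = qfact q n / (qfact q k * qfact q (n - k))"

definition qpoch :: "'a::field \<Rightarrow> 'a \<Rightarrow> nat \<Rightarrow> 'a" where
  "qpoch a q n = (\<Prod>i<n. (1 - q ^ i * a))"

definition qX :: "rat poly fract" where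
  "qX = Fract [:0, 1:] 1"

end

theory Submission
  imports Defs
begin

text \<open>Write a = q^m. Up to the factor (1 - q)^n, the sum is
  S(n) = \<Sum>k\<le>n. [n k] q^(k choose 2) (1 - q^(2k) a) / (q^k a; q)_(n+1)
and the right-hand side is (-1; q)_n / (q a; q^2)_n. Both equal 1 at n = 0 and satisfy
  (1 - q^(2n+1) a) S(n+1) = (1 + q^n) S(n).
For the sum this is a Wilf-Zeilberger argument: termwise, the difference of the two sides
telescopes against an explicit certificate. Nothing in it uses a = q^m, so it runs for every a
with q^i a \<noteq> 1.\<close>

lemma qfact_0 [simp]: "qfact q 0 = 1"
  by (simp add: qfact_def)

lemma qfact_Suc: "qfact q (Suc n) = qfact q n * qint q (Suc n)"
  by (simp add: qfact_def)

lemma qpoch_Suc: "qpoch x q (Suc n) = qpoch x q n * (1 - q ^ n * x)"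
  by (simp add: qpoch_def)

lemma qpoch_Suc_shift: "qpoch x q (Suc n) = (1 - x) * qpoch (q * x) q n"
  unfolding qpoch_def by (subst prod.lessThan_Suc_shift) (simp add: mult_ac)

lemma choose_two_Suc: "Suc j choose 2 = j + (j choose 2)"
  by (simp add: numeral_2_eq_2)

lemma qfact_add: "qfact q (l + s) = qfact q l * (\<Prod>i<s. qint q (Suc (l + i)))"
  by (induction s) (simp_all add: qfact_Suc mult_ac)

lemma prod_qint_eq_qpoch: "(\<Prod>i<s. qint q (l + i)) = qpoch (q ^ l) q s / (1 - q) ^ s"
  unfolding qint_def qpoch_def by (simp add: prod_dividef power_add mult_ac)

lemma prod_qint_odd_eq_qpoch:
  "(\<Prod>j<n. qint q (m + 2 * j + 1)) = qpoch (q * q ^ m) (q^2) n / (1 - q) ^ n"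
  unfolding qint_def qpoch_def
  by (simp add: prod_dividef power_add power_mult[symmetric] mult_ac)

locale q_not_root_of_unity =
  fixes q :: "'a::field"
  assumes q_pow_ne_1: "\<And>j. j > 0 \<Longrightarrow> q ^ j \<noteq> 1"
begin

lemma qint_nonzero: "j > 0 \<Longrightarrow> qint q j \<noteq> 0"
  using q_pow_ne_1[of j] q_pow_ne_1[of 1] by (simp add: qint_def)

lemma qfact_nonzero: "qfact q n \<noteq> 0"
  by (simp add: qfact_def qint_nonzero)

lemma qbinom_0: "qbinom q n 0 = 1"
  by (simp add: qbinom_def qfact_nonzero)

lemma qbinom_diag: "qbinom q n n = 1"
  by (simp add: qbinom_def qfact_nonzero)

lemma qbinom_Suc_Suc:
  assumes "k \<le> n"
  shows "qbinom q (Suc n) (Suc k) = qint q (Suc n) / qint q (Suc k) * qbinom q n k"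
  using assms qint_nonzero[of "Suc k"]
  by (simp add: qbinom_def qfact_Suc Suc_diff_le mult_ac)

lemma qbinom_Suc_right:
  assumes "k < n"
  shows "qbinom q n (Suc k) = qint q (n - k) / qint q (Suc k) * qbinom q n k"
proof -
  have "qfact q (n - k) = qfact q (n - Suc k) * qint q (n - k)"
    using assms qfact_Suc[of q "n - Suc k"] by (simp add: Suc_diff_Suc)
  then show ?thesis
    using qint_nonzero[of "n - k"] qint_nonzero[of "Suc k"] qfact_nonzero assms
    by (simp add: qbinom_def qfact_Suc field_simps)
qed

lemma qint_ratio: "qint q i / qint q j = (1 - q ^ i) / (1 - q ^ j)"
  using q_pow_ne_1[of 1] by (simp add: qint_def)

end

definition qsummand :: "'a::field \<Rightarrow> 'a \<Rightarrow> nat \<Rightarrow> nat \<Rightarrow> 'a" where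
  "qsummand q a n k =
     qbinom q n k * q ^ (k choose 2) * (1 - q ^ (2 * k) * a) / qpoch (q ^ k * a) q (Suc n)"

text \<open>The telescoping certificate for this recurrence, as found by the q-Zeilberger algorithm.\<close>

definition qsummand_cert :: "'a::field \<Rightarrow> 'a \<Rightarrow> nat \<Rightarrow> nat \<Rightarrow> 'a" where
  "qsummand_cert q a n k = (case k of 0 \<Rightarrow> 0 | Suc j \<Rightarrow>
     q ^ (n + (j choose 2)) * qbinom q n j * (1 - q ^ (2 * j + 1) * a) / qpoch (q ^ k * a) q (Suc n))"

definition qsum :: "'a::field \<Rightarrow> 'a \<Rightarrow> nat \<Rightarrow> 'a" where
  "qsum q a n = (\<Sum>k\<le>n. qsummand q a n k)"

context q_not_root_of_unity
begin

lemma qfact_quotient_eq_qsummand: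
  assumes "m > 0"
  shows "qbinom q n k * q ^ (k choose 2) * qint q (m + 2 * k) * qfact q (m + k - 1) / qfact q (m + n + k)
    = (1 - q) ^ n * qsummand q (q ^ m) n k"
proof -
  obtain l where l: "m + k = Suc l" using assms by (cases m) auto
  have "m + n + k = l + Suc n" using l by simp
  then have "qfact q (m + n + k) = qfact q l * (\<Prod>i<Suc n. qint q (Suc (l + i)))"
    by (simp only: qfact_add)
  also have "(\<Prod>i<Suc n. qint q (Suc (l + i))) = qpoch (q ^ (m + k)) q (Suc n) / (1 - q) ^ Suc n"
    using prod_qint_eq_qpoch[of q "Suc l" "Suc n"] unfolding l by simp
  finally have fact: "qfact q (m + n + k)
      = qfact q (m + k - 1) * (qpoch (q ^ (m + k)) q (Suc n) / (1 - q) ^ Suc n)"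
    using l by simp
  have pows: "q ^ (m + 2 * k) = q ^ (2 * k) * q ^ m" "q ^ (m + k) = q ^ k * q ^ m"
    by (simp_all add: power_add mult_ac)
  have "qfact q (m + k - 1) \<noteq> 0" "1 - q \<noteq> 0" "qpoch (q ^ (m + k)) q (Suc n) \<noteq> 0"
    using qfact_nonzero q_pow_ne_1[of 1] q_pow_ne_1[of "_ + (m + k)"] assms
    by (auto simp: qpoch_def power_add)
  then show ?thesis
    unfolding qsummand_def qint_def fact pows by (simp add: field_simps)
qed

end

lemma qsummand_cert_identity:
  fixes q u w a :: "'a::idom"
  shows "(1 - q * u^2 * w^2 * a) * ((1 - q * u * w) * (1 - q^2 * u^2 * a))
      - (1 + u * w) * ((1 - w) * (1 - q^2 * u^2 * a) * (1 - q^2 * u^2 * w * a))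
    = w * (1 - q * u^2 * a) * (1 - q * u) * (1 - q^2 * u^2 * w * a)
      - u * w * (1 - w) * (1 - q^3 * u^2 * a) * (1 - q * u * a)"
  by algebra

locale qsummand_parameters = q_not_root_of_unity +
  fixes a :: "'a::field"
  assumes q_pow_mult_a_ne_1: "\<And>i. q ^ i * a \<noteq> 1"
begin

lemma qpoch_shifted_nonzero: "qpoch (q ^ k * a) q n \<noteq> 0"
  using q_pow_mult_a_ne_1[of "_ + k"] by (simp add: qpoch_def power_add mult.assoc)

lemma qsummand_telescoping_inner:
  assumes "j < n"
  shows "(1 - q ^ (2 * n + 1) * a) * qsummand q a (Suc n) (Suc j) - (1 + q ^ n) * qsummand q a n (Suc j)
    = qsummand_cert q a n (Suc j) - qsummand_cert q a n (Suc (Suc j))"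
proof -
  obtain r where n: "n = j + r" using assms less_imp_add_positive by blast
  define u w c B D where "u = q ^ j" and "w = q ^ r" and "c = q ^ (j choose 2)"
    and "B = qbinom q n j" and "D = qpoch (q * u * a) q (Suc n)"
  define P E G where "P = 1 - q * u" and "E = 1 - q^2 * u^2 * w * a" and "G = 1 - q * u * a"
  have pows: "q ^ n = u * w" "q ^ Suc n = q * u * w" "q ^ (2 * n + 1) = q * u^2 * w^2"
    "q ^ (n + (j choose 2)) = u * w * c" "q ^ (n + (Suc j choose 2)) = u * w * (c * u)"
    "q ^ (Suc j choose 2) = c * u" "q ^ Suc j = q * u" "q ^ Suc (Suc j) = q^2 * u"
    "q ^ (2 * Suc j) = q^2 * u^2" "q ^ (2 * j + 1) = q * u^2" "q ^ (2 * Suc j + 1) = q^3 * u^2"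
    unfolding n u_def w_def c_def choose_two_Suc mult_2
    by (simp_all only: power_add power_Suc power_one_right power2_eq_square power3_eq_cube mult_ac)
  have bin_Suc: "qbinom q (Suc n) (Suc j) = (1 - q * u * w) / P * B"
    using qbinom_Suc_Suc[of j n] assms unfolding qint_ratio pows B_def P_def by simp
  have bin: "qbinom q n (Suc j) = (1 - w) / P * B"
    using qbinom_Suc_right[OF assms] unfolding qint_ratio pows B_def P_def by (simp add: n w_def)
  have D_Suc: "qpoch (q * u * a) q (Suc (Suc n)) = D * E"
    unfolding D_def E_def qpoch_Suc[of _ q "Suc n"] pows by (simp add: power2_eq_square mult_ac)
  have "G \<noteq> 0"
    using q_pow_mult_a_ne_1[of "Suc j"] unfolding G_def pows by simp
  moreover have "D * E = G * qpoch (q^2 * u * a) q (Suc n)"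
    using qpoch_Suc_shift[of "q * u * a" q "Suc n"] unfolding D_Suc G_def
    by (simp add: power2_eq_square mult.assoc)
  ultimately have D_shift: "qpoch (q^2 * u * a) q (Suc n) = D * E / G"
    by (simp add: field_simps)
  have nonzero: "D \<noteq> 0" "P \<noteq> 0" "E \<noteq> 0" "G \<noteq> 0"
    using qpoch_shifted_nonzero[of "Suc j" "Suc n"] qpoch_shifted_nonzero[of "Suc j" "Suc (Suc n)"]
      q_pow_ne_1[of "Suc j"] \<open>G \<noteq> 0\<close>
    unfolding D_def P_def pows D_Suc by auto
  define K where "K = c * B * u / (D * P * E)"
  have summand_Suc: "qsummand q a (Suc n) (Suc j) = K * ((1 - q * u * w) * (1 - q^2 * u^2 * a))"
    unfolding qsummand_def bin_Suc pows D_Suc K_def using nonzero by (simp add: field_simps)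
  have summand: "qsummand q a n (Suc j) = K * ((1 - w) * (1 - q^2 * u^2 * a) * E)"
    unfolding qsummand_def bin pows D_def[symmetric] K_def using nonzero by (simp add: field_simps)
  have cert: "qsummand_cert q a n (Suc j) = K * (w * (1 - q * u^2 * a) * P * E)"
    unfolding qsummand_cert_def nat.case pows B_def[symmetric] D_def[symmetric] K_def
    using nonzero by (simp add: field_simps)
  have cert_Suc: "qsummand_cert q a n (Suc (Suc j)) = K * (u * w * (1 - w) * (1 - q^3 * u^2 * a) * G)"
    unfolding qsummand_cert_def nat.case pows bin D_shift K_def using nonzero by (simp add: field_simps)
  show ?thesis
    using qsummand_cert_identity[of q u w a]
    unfolding pows summand_Suc summand cert cert_Suc P_def E_def G_def
    by (metis (no_types, lifting) mult.left_commute right_diff_distrib)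
qed

lemma qsummand_telescoping:
  assumes "k \<le> n"
  shows "(1 - q ^ (2 * n + 1) * a) * qsummand q a (Suc n) k - (1 + q ^ n) * qsummand q a n k
    = qsummand_cert q a n k - qsummand_cert q a n (Suc k)"
proof (cases k)
  case 0
  define y E F where "y = q ^ n" and "E = qpoch (q * a) q n" and "F = 1 - q * y * a"
  have nonzero: "E \<noteq> 0" "F \<noteq> 0" "1 - a \<noteq> 0"
    using qpoch_shifted_nonzero[of 1 n] q_pow_mult_a_ne_1[of "Suc n"] q_pow_mult_a_ne_1[of 0]
    by (auto simp: E_def F_def y_def)
  have poch: "qpoch a q (Suc n) = (1 - a) * E" "qpoch (q * a) q (Suc n) = E * F"
    "qpoch a q (Suc (Suc n)) = (1 - a) * (E * F)"
    unfolding E_def F_def y_def qpoch_Suc_shift[of a] qpoch_Suc[of "q * a"] by (simp_all add: mult_ac)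
  have summands: "qsummand q a (Suc n) 0 = 1 / (E * F)" "qsummand q a n 0 = 1 / E"
    using nonzero by (simp_all add: qsummand_def qbinom_0 binomial_eq_0 poch)
  have certs: "qsummand_cert q a n 0 = 0" "qsummand_cert q a n (Suc 0) = y * (1 - q * a) / (E * F)"
    by (simp_all add: qsummand_cert_def qbinom_0 binomial_eq_0 poch flip: y_def)
  have pow: "q ^ (2 * n + 1) = q * y^2"
    unfolding y_def mult_2 by (simp only: power_add power_one_right power2_eq_square mult_ac)
  have "(1 - q ^ (2 * n + 1) * a) * qsummand q a (Suc n) 0 - (1 + q ^ n) * qsummand q a n 0
      = ((1 - q * y^2 * a) - (1 + y) * F) / (E * F)"
    unfolding summands pow y_def[symmetric] using nonzero by (simp add: field_simps)
  also have "(1 - q * y^2 * a) - (1 + y) * F = - (y * (1 - q * a))"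
    unfolding F_def by algebra
  finally show ?thesis
    unfolding \<open>k = 0\<close> certs by simp
next
  case (Suc j)
  then show ?thesis using qsummand_telescoping_inner assms by simp
qed

lemma qsummand_telescoping_top:
  "(1 - q ^ (2 * n + 1) * a) * qsummand q a (Suc n) (Suc n) = qsummand_cert q a n (Suc n)"
proof -
  define R where "R = qpoch (q ^ Suc n * a) q (Suc n)"
  have poch: "qpoch (q ^ Suc n * a) q (Suc (Suc n)) = R * (1 - q ^ (2 * Suc n) * a)"
    unfolding R_def qpoch_Suc[of _ q "Suc n"] mult_2 by (simp add: power_add mult.assoc)
  have "R \<noteq> 0" "1 - q ^ (2 * Suc n) * a \<noteq> 0"
    using qpoch_shifted_nonzero[of "Suc n" "Suc n"] q_pow_mult_a_ne_1[of "2 * Suc n"]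
    by (auto simp: R_def)
  then show ?thesis
    unfolding qsummand_def qsummand_cert_def nat.case qbinom_diag choose_two_Suc poch R_def[symmetric]
    by (simp add: field_simps)
qed

lemma qsum_Suc: "(1 - q ^ (2 * n + 1) * a) * qsum q a (Suc n) = (1 + q ^ n) * qsum q a n"
proof -
  let ?A = "1 - q ^ (2 * n + 1) * a"
  have "?A * qsum q a (Suc n) - (1 + q ^ n) * qsum q a n
      = ?A * qsummand q a (Suc n) (Suc n)
        + (\<Sum>k<Suc n. ?A * qsummand q a (Suc n) k - (1 + q ^ n) * qsummand q a n k)"
    by (simp add: qsum_def sum_distrib_left sum_subtractf lessThan_Suc_atMost distrib_left add_ac)
  also have "(\<Sum>k<Suc n. ?A * qsummand q a (Suc n) k - (1 + q ^ n) * qsummand q a n k)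
      = (\<Sum>k<Suc n. qsummand_cert q a n k - qsummand_cert q a n (Suc k))"
    by (rule sum.cong[OF refl], rule qsummand_telescoping) simp
  also have "\<dots> = - qsummand_cert q a n (Suc n)"
    by (subst sum_lessThan_telescope') (simp add: qsummand_cert_def)
  also have "?A * qsummand q a (Suc n) (Suc n) + - qsummand_cert q a n (Suc n) = 0"
    unfolding qsummand_telescoping_top by simp
  finally show ?thesis
    by simp
qed

theorem qsum_closed_form: "qsum q a n = qpoch (-1) q n / qpoch (q * a) (q^2) n"
proof (induction n)
  case 0
  have "1 - a \<noteq> 0" using q_pow_mult_a_ne_1[of 0] by simp
  then show ?case by (simp add: qsum_def qsummand_def qbinom_0 binomial_eq_0 qpoch_def)
next
  case (Suc n)
  have "1 - q ^ (2 * n + 1) * a \<noteq> 0" using q_pow_mult_a_ne_1[of "2 * n + 1"] by simp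
  then have step: "qsum q a (Suc n) = (1 + q ^ n) / (1 - q ^ (2 * n + 1) * a) * qsum q a n"
    using qsum_Suc[of n] by (simp add: field_simps)
  have pow: "(q^2) ^ n * (q * a) = q ^ (2 * n + 1) * a"
    by (simp only: power_mult[symmetric] power_add power_one_right mult_ac)
  show ?case
    unfolding step Suc.IH qpoch_Suc pow by (simp add: mult_ac)
qed

end

lemma qX_pow: "qX ^ j = Fract ([:0, 1:] ^ j) 1"
  by (induction j) (simp_all add: qX_def One_fract_def)

lemma qX_pow_ne_1:
  assumes "j > 0"
  shows "qX ^ j \<noteq> 1"
proof
  assume "qX ^ j = 1"
  then have "([:0, 1:] :: rat poly) ^ j = 1"
    unfolding qX_pow One_fract_def by (simp add: eq_fract)
  then have "degree (([:0, 1:] :: rat poly) ^ j) = 0" by simp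
  moreover have "degree (([:0, 1:] :: rat poly) ^ j) = j" by (simp add: degree_power_eq)
  ultimately show False using assms by simp
qed

theorem mainTheorem15:
  fixes m n :: nat
  assumes "m \<ge> 1"
  shows "(\<Sum>k=0..n. qbinom qX n k * qX ^ (k choose 2) * qint qX (m + 2 * k)
            * qfact qX (m + k - 1) / qfact qX (m + n + k))
         = qpoch (-1) qX n / (\<Prod>j<n. qint qX (m + 2 * j + 1))"
proof -
  interpret qsummand_parameters qX "qX ^ m"
    by unfold_locales (use qX_pow_ne_1 assms in \<open>simp_all add: power_add[symmetric]\<close>)
  have "(\<Sum>k=0..n. qbinom qX n k * qX ^ (k choose 2) * qint qX (m + 2 * k)
            * qfact qX (m + k - 1) / qfact qX (m + n + k))
      = (\<Sum>k\<le>n. (1 - qX) ^ n * qsummand qX (qX ^ m) n k)"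
    using qfact_quotient_eq_qsummand assms by (simp add: atLeast0AtMost)
  also have "\<dots> = (1 - qX) ^ n * qsum qX (qX ^ m) n"
    by (simp add: qsum_def sum_distrib_left)
  also have "\<dots> = qpoch (-1) qX n / (\<Prod>j<n. qint qX (m + 2 * j + 1))"
    unfolding qsum_closed_form prod_qint_odd_eq_qpoch by simp
  finally show ?thesis .
qed

end
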